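(* For every $n\ge1$ and every boolean function $f:\{-1,1\}^n\to\{-1,1\}$, $$\mathrm{Ent}(f)\le \frac{1}{\ln 2}\Big(3I(f)+\sum_{k=1}^n I_k(f)\ln\frac{4}{I_k(f)}\Big),$$ with the convention $I_k(f)\ln\frac{4}{I_k(f)}=0$ when $I_k(f)=0$.
   Context: Let $x$ be uniformly distributed on $\{-1,1\}^n$. For $k\in[n]$, $\mu_k$ flips the $k$-th coordinate. $I_k(f)=\mathbb{P}_x[f(x)\neq f(\mu_k(x))]$, $I(f)=\sum_k I_k(f)$. For $S\subseteq[n]$, $\hat f(S)=\mathbb{E}_x[f(x)\prod_{k\in S}x_k]$, and $\mathrm{Ent}(f)=\sum_{S\subseteq[n]}\hat f(S)^2\log_2\frac{1}{\hat f(S)^2}$ (terms with $\hat f(S)=0$ are $0$). $\ln$ is the natural logarithm. *)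

theory Defs
  imports Complex_Main "HOL-Library.FuncSet"
begin

definition cube :: "nat \<Rightarrow> (nat \<Rightarrow> real) set" where
  "cube n = PiE {..<n} (\<lambda>_. {-1, 1})"

definition flip :: "nat \<Rightarrow> (nat \<Rightarrow> real) \<Rightarrow> (nat \<Rightarrow> real)" where
  "flip k x = x(k := - x k)"

definition infl_k :: "nat \<Rightarrow> ((nat \<Rightarrow> real) \<Rightarrow> real) \<Rightarrow> nat \<Rightarrow> real" where
  "infl_k n f k = real (card {x \<in> cube n. f x \<noteq> f (flip k x)}) / 2 ^ n"

definition total_infl :: "nat \<Rightarrow> ((nat \<Rightarrow> real) \<Rightarrow> real) \<Rightarrow> real" where
  "total_infl n f = (\<Sum>k<n. infl_k n f k)"

definition fourier :: "nat \<Rightarrow> ((nat \<Rightarrow> real) \<Rightarrow> real) \<Rightarrow> nat set \<Rightarrow> real" where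
  "fourier n f S = (\<Sum>x\<in>cube n. f x * (\<Prod>k\<in>S. x k)) / 2 ^ n"

definition spectral_entropy :: "nat \<Rightarrow> ((nat \<Rightarrow> real) \<Rightarrow> real) \<Rightarrow> real" where
  "spectral_entropy n f = (\<Sum>S\<in>Pow {..<n}.
      if fourier n f S = 0 then 0
      else (fourier n f S)\<^sup>2 * log 2 (1 / (fourier n f S)\<^sup>2))"

end

theory Submission imports Defs begin

text \<open>The squared Fourier coefficients of a boolean function form a probability distribution on
  subsets of the coordinates (Parseval), and the weight of the sets containing k is I_k(f).
  Comparing this distribution with the product of independent Bernoulli(I_k(f)) choices via
  Gibbs' inequality shows that its entropy is at most the sum of the binary entropies
  H(I_k(f)); finally H(p) \<le> p + p ln(1/p) \<le> 3p + p ln(4/p).\<close>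

lemma cube_coord: "x \<in> cube n \<Longrightarrow> k < n \<Longrightarrow> x k = -1 \<or> x k = 1"
  by (auto simp: cube_def PiE_iff)

lemma finite_cube: "finite (cube n)"
  by (simp add: cube_def finite_PiE)

lemma card_cube: "card (cube n) = 2 ^ n"
  by (simp add: cube_def card_PiE numeral_2_eq_2)

lemma flip_in_cube: "x \<in> cube n \<Longrightarrow> k < n \<Longrightarrow> flip k x \<in> cube n"
  by (auto simp: cube_def PiE_iff flip_def extensional_def)

lemma flip_flip [simp]: "flip k (flip k x) = x"
  by (simp add: flip_def)

lemma sum_Pow_chi_mult:
  assumes "x \<in> cube n" "y \<in> cube n"
  shows "(\<Sum>S\<in>Pow {..<n}. (\<Prod>k\<in>S. x k) * (\<Prod>k\<in>S. y k)) = (if x = y then 2 ^ n else 0)"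
proof -
  have "(\<Sum>S\<in>Pow {..<n}. (\<Prod>k\<in>S. x k) * (\<Prod>k\<in>S. y k))
      = (\<Sum>S\<in>Pow {..<n}. (\<Prod>k\<in>S. x k * y k) * (\<Prod>k\<in>{..<n}-S. 1))"
    by (simp add: prod.distrib)
  also have "\<dots> = (\<Prod>k<n. x k * y k + 1)"
    by (rule prod_add[symmetric]) simp
  also have "\<dots> = (if x = y then 2 ^ n else 0)"
  proof (cases "x = y")
    case True
    have "(\<Prod>k<n. x k * y k + 1) = (\<Prod>k<n. 2::real)"
      using cube_coord[OF assms(1)] True by (intro prod.cong) fastforce+
    then show ?thesis using True by simp
  next
    case False
    then obtain k where k: "k < n" "x k \<noteq> y k"
      using PiE_ext[of x "{..<n}" "\<lambda>_. {-1, 1::real}" y] assms by (auto simp: cube_def)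
    then have "x k * y k + 1 = 0"
      using cube_coord[OF assms(1) k(1)] cube_coord[OF assms(2) k(1)] by auto
    then have "(\<Prod>k<n. x k * y k + 1) = 0" using k(1) by (intro prod_zero) auto
    then show ?thesis using False by simp
  qed
  finally show ?thesis .
qed

lemma parseval:
  "(\<Sum>S\<in>Pow {..<n}. (fourier n g S)\<^sup>2) = (\<Sum>x\<in>cube n. (g x)\<^sup>2) / 2 ^ n"
proof -
  let ?\<chi> = "\<lambda>S x y. (\<Prod>k\<in>S. x k) * (\<Prod>k\<in>S. y k)"
  have square: "(fourier n g S)\<^sup>2
      = (\<Sum>x\<in>cube n. \<Sum>y\<in>cube n. g x * g y * ?\<chi> S x y) / (2 ^ n * 2 ^ n)" for S
    unfolding fourier_def power2_eq_square by (simp add: sum_product algebra_simps)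
  have "(\<Sum>S\<in>Pow {..<n}. \<Sum>x\<in>cube n. \<Sum>y\<in>cube n. g x * g y * ?\<chi> S x y)
     = (\<Sum>x\<in>cube n. \<Sum>y\<in>cube n. g x * g y * (\<Sum>S\<in>Pow {..<n}. ?\<chi> S x y))"
    unfolding sum_distrib_left by (rule trans[OF sum.swap sum.cong[OF refl sum.swap]])
  also have "\<dots> = (\<Sum>x\<in>cube n. (g x)\<^sup>2 * 2 ^ n)"
    by (intro sum.cong refl)
      (simp add: sum_Pow_chi_mult finite_cube power2_eq_square if_distrib cong: if_cong)
  finally show ?thesis
    by (simp add: square sum_divide_distrib[symmetric] sum_distrib_right[symmetric])
qed

lemma prod_flip:
  assumes "finite S"
  shows "(\<Prod>j\<in>S. flip k y j) = (if k \<in> S then - (\<Prod>j\<in>S. y j) else (\<Prod>j\<in>S. y j))"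
proof (cases "k \<in> S")
  case True
  have "(\<Prod>j\<in>S-{k}. flip k y j) = (\<Prod>j\<in>S-{k}. y j)"
    by (rule prod.cong) (auto simp: flip_def)
  then show ?thesis
    using True prod.remove[OF assms True, of "flip k y"] prod.remove[OF assms True, of y]
    by (simp add: flip_def)
next
  case False
  then show ?thesis by (auto intro!: prod.cong simp: flip_def)
qed

lemma fourier_flip:
  assumes "k < n" "S \<subseteq> {..<n}"
  shows "fourier n (\<lambda>x. f (flip k x)) S = (if k \<in> S then - fourier n f S else fourier n f S)"
proof -
  have "finite S" using assms(2) finite_subset by blast
  have "(\<Sum>x\<in>cube n. f (flip k x) * (\<Prod>j\<in>S. x j)) = (\<Sum>y\<in>cube n. f y * (\<Prod>j\<in>S. flip k y j))"
    by (rule sum.reindex_bij_witness[of _ "flip k" "flip k"]) (auto simp: flip_in_cube assms)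
  also have "\<dots> = (\<Sum>y\<in>cube n. (if k \<in> S then - 1 else 1) * (f y * (\<Prod>j\<in>S. y j)))"
    by (intro sum.cong refl) (simp add: prod_flip[OF \<open>finite S\<close>])
  finally show ?thesis
    unfolding fourier_def by (simp add: sum_distrib_left[symmetric] sum_negf)
qed

lemma infl_k_eq_fourier_weight:
  assumes k: "k < n" and f: "\<And>x. x \<in> cube n \<Longrightarrow> f x \<in> {-1, 1}"
  shows "infl_k n f k = (\<Sum>S\<in>Pow {..<n}. if k \<in> S then (fourier n f S)\<^sup>2 else 0)"
proof -
  \<comment> \<open>The derivative of f in direction k; its Fourier transform keeps exactly the sets containing k.\<close>
  define g where "g x = (f x - f (flip k x)) / 2" for x
  have fourier_g_diff: "fourier n g S = (fourier n f S - fourier n (\<lambda>x. f (flip k x)) S) / 2" for S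
    unfolding fourier_def g_def
    by (simp add: sum_divide_distrib[symmetric] sum_subtractf left_diff_distrib diff_divide_distrib)
  have fourier_g: "fourier n g S = (if k \<in> S then fourier n f S else 0)"
    if "S \<in> Pow {..<n}" for S
    using fourier_g_diff[of S] fourier_flip[OF k, of S f] that
    by (cases "k \<in> S") (simp_all add: field_simps)
  have "(g x)\<^sup>2 = (if f x \<noteq> f (flip k x) then 1 else 0)" if x: "x \<in> cube n" for x
    using f[OF x] f[OF flip_in_cube[OF x k]] unfolding g_def by auto
  then have "(\<Sum>x\<in>cube n. (g x)\<^sup>2) = real (card {x \<in> cube n. f x \<noteq> f (flip k x)})"
    by (simp add: sum.If_cases finite_cube Int_def)
  then have "infl_k n f k = (\<Sum>S\<in>Pow {..<n}. (fourier n g S)\<^sup>2)"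
    unfolding infl_k_def parseval by simp
  also have "\<dots> = (\<Sum>S\<in>Pow {..<n}. if k \<in> S then (fourier n f S)\<^sup>2 else 0)"
    by (intro sum.cong refl) (simp add: fourier_g)
  finally show ?thesis .
qed

lemma sum_fourier_squared_boolean:
  assumes f: "\<And>x. x \<in> cube n \<Longrightarrow> f x \<in> {-1, 1}"
  shows "(\<Sum>S\<in>Pow {..<n}. (fourier n f S)\<^sup>2) = 1"
proof -
  have "(\<Sum>x\<in>cube n. (f x)\<^sup>2) = (\<Sum>x\<in>cube n. 1)"
    by (rule sum.cong[OF refl]) (use f in fastforce)
  then show ?thesis by (simp add: parseval card_cube)
qed

lemma infl_k_bounds: "0 \<le> infl_k n f k \<and> infl_k n f k \<le> 1"
proof -
  have "card {x \<in> cube n. f x \<noteq> f (flip k x)} \<le> card (cube n)"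
    by (rule card_mono[OF finite_cube]) auto
  then have "real (card {x \<in> cube n. f x \<noteq> f (flip k x)}) \<le> 2 ^ n"
    unfolding card_cube by (metis of_nat_le_iff of_nat_numeral of_nat_power)
  then show ?thesis unfolding infl_k_def by simp
qed

definition shannon_entropy :: "'a set \<Rightarrow> ('a \<Rightarrow> real) \<Rightarrow> real" where
  "shannon_entropy A W = (\<Sum>a\<in>A. if W a = 0 then 0 else W a * ln (1 / W a))"

text \<open>Since ln 0 = 0 in Isabelle, this is also correct at p = 0 and p = 1.\<close>
definition binary_entropy :: "real \<Rightarrow> real" where
  "binary_entropy p = - p * ln p - (1 - p) * ln (1 - p)"

lemma gibbs_inequality:
  assumes "finite A"
    and W: "\<And>a. a \<in> A \<Longrightarrow> 0 \<le> W a" "sum W A = 1"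
    and Q: "\<And>a. a \<in> A \<Longrightarrow> 0 \<le> Q a" "sum Q A \<le> 1"
    and supp: "\<And>a. a \<in> A \<Longrightarrow> W a > 0 \<Longrightarrow> Q a > 0"
  shows "shannon_entropy A W \<le> (\<Sum>a\<in>A. W a * ln (1 / Q a))"
proof -
  have "(if W a = 0 then 0 else W a * ln (1 / W a)) \<le> W a * ln (1 / Q a) + (Q a - W a)"
    if a: "a \<in> A" for a
  proof (cases "W a = 0")
    case False
    then have "W a > 0" "Q a > 0" using W(1) supp a by force+
    have "W a * ln (1 / W a) - W a * ln (1 / Q a) = W a * ln (Q a / W a)"
      using \<open>W a > 0\<close> \<open>Q a > 0\<close> by (simp add: ln_div algebra_simps)
    also have "\<dots> \<le> W a * (Q a / W a - 1)"
      using \<open>W a > 0\<close> \<open>Q a > 0\<close> by (intro mult_left_mono ln_le_minus_one) auto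
    also have "\<dots> = Q a - W a"
      using \<open>W a > 0\<close> by (simp add: field_simps)
    finally show ?thesis using False by simp
  qed (use Q(1) a in simp)
  then have "shannon_entropy A W \<le> (\<Sum>a\<in>A. W a * ln (1 / Q a)) + (sum Q A - sum W A)"
    unfolding shannon_entropy_def by (simp add: sum_mono sum.distrib[symmetric] sum_subtractf[symmetric])
  then show ?thesis using W(2) Q(2) by linarith
qed

lemma sum_Pow_prod_bernoulli:
  fixes p :: "'a \<Rightarrow> 'b :: comm_ring_1"
  assumes "finite I"
  shows "(\<Sum>S\<in>Pow I. \<Prod>i\<in>I. if i \<in> S then p i else 1 - p i) = 1"
proof -
  have "(\<Prod>i\<in>I. if i \<in> S then p i else 1 - p i) = (\<Prod>i\<in>S. p i) * (\<Prod>i\<in>I - S. 1 - p i)"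
    if "S \<in> Pow I" for S
    using prod.If_cases[OF assms, of "\<lambda>i. i \<in> S" p "\<lambda>i. 1 - p i"] that
    by (simp add: Int_absorb1 Diff_eq Collect_mem_eq)
  then have "(\<Sum>S\<in>Pow I. \<Prod>i\<in>I. if i \<in> S then p i else 1 - p i)
      = (\<Sum>S\<in>Pow I. (\<Prod>i\<in>S. p i) * (\<Prod>i\<in>I - S. 1 - p i))"
    by simp
  also have "\<dots> = (\<Prod>i\<in>I. p i + (1 - p i))"
    by (rule prod_add[OF assms, symmetric])
  finally show ?thesis by simp
qed

lemma sum_Pow_compl_marginal:
  fixes W :: "'a set \<Rightarrow> real"
  assumes "(\<Sum>S\<in>Pow I. W S) = 1" "(\<Sum>S\<in>Pow I. if i \<in> S then W S else 0) = p"
  shows "(\<Sum>S\<in>Pow I. if i \<in> S then 0 else W S) = 1 - p"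
proof -
  have "(\<Sum>S\<in>Pow I. W S)
      = (\<Sum>S\<in>Pow I. (if i \<in> S then W S else 0) + (if i \<in> S then 0 else W S))"
    by (rule sum.cong) auto
  also have "\<dots> = p + (\<Sum>S\<in>Pow I. if i \<in> S then 0 else W S)"
    using assms(2) by (simp only: sum.distrib)
  finally show ?thesis using assms(1) by linarith
qed

lemma le_bernoulli_marginal:
  fixes W :: "'a set \<Rightarrow> real"
  assumes "finite I" "S \<subseteq> I" "i \<in> I"
    and W: "\<And>S. S \<subseteq> I \<Longrightarrow> 0 \<le> W S" "(\<Sum>S\<in>Pow I. W S) = 1"
    and marginal: "(\<Sum>S\<in>Pow I. if i \<in> S then W S else 0) = p"
  shows "W S \<le> (if i \<in> S then p else 1 - p)"
proof -
  have "(if i \<in> S then W S else 0) \<le> (\<Sum>T\<in>Pow I. if i \<in> T then W T else 0)"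
    by (rule member_le_sum) (use assms in auto)
  moreover have "(if i \<in> S then 0 else W S) \<le> (\<Sum>T\<in>Pow I. if i \<in> T then 0 else W T)"
    by (rule member_le_sum) (use assms in auto)
  ultimately show ?thesis
    using marginal sum_Pow_compl_marginal[OF W(2) marginal] by (auto split: if_splits)
qed

lemma shannon_entropy_le_sum_binary_entropy:
  fixes W :: "'a set \<Rightarrow> real"
  assumes "finite I"
    and W: "\<And>S. S \<subseteq> I \<Longrightarrow> 0 \<le> W S" "(\<Sum>S\<in>Pow I. W S) = 1"
    and marginal: "\<And>i. i \<in> I \<Longrightarrow> (\<Sum>S\<in>Pow I. if i \<in> S then W S else 0) = p i"
  shows "shannon_entropy (Pow I) W \<le> (\<Sum>i\<in>I. binary_entropy (p i))"
proof -
  define c where "c S i = (if i \<in> S then p i else 1 - p i)" for S i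
  define Q where "Q S = (\<Prod>i\<in>I. c S i)" for S
  have W_le_c: "W S \<le> c S i" if "S \<subseteq> I" "i \<in> I" for S i
    unfolding c_def using le_bernoulli_marginal[OF \<open>finite I\<close> that W marginal] that by simp
  have c_nonneg: "0 \<le> c S i" if "i \<in> I" for S i
    using W_le_c[of "{}" i] W_le_c[of "{i}" i] W(1)[of "{}"] W(1)[of "{i}"] that
    by (force simp: c_def)
  have ln_Q: "W S * ln (1 / Q S) = (\<Sum>i\<in>I. W S * - ln (c S i))" if "S \<subseteq> I" for S
  proof (cases "W S = 0")
    case False
    then have c_pos: "c S i > 0" if "i \<in> I" for i
      using W_le_c[OF \<open>S \<subseteq> I\<close> that] W(1)[OF \<open>S \<subseteq> I\<close>] by linarith
    have "Q S > 0"
      unfolding Q_def using c_pos by (simp add: prod_pos)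
    moreover have "ln (Q S) = (\<Sum>i\<in>I. ln (c S i))"
      unfolding Q_def using c_pos by (intro ln_prod \<open>finite I\<close>) (metis less_irrefl)
    ultimately show ?thesis by (simp add: ln_div sum_negf sum_distrib_left)
  qed simp
  have "shannon_entropy (Pow I) W \<le> (\<Sum>S\<in>Pow I. W S * ln (1 / Q S))"
  proof (rule gibbs_inequality)
    show "(\<Sum>S\<in>Pow I. Q S) \<le> 1"
      using sum_Pow_prod_bernoulli[OF \<open>finite I\<close>, of p] by (simp add: Q_def c_def)
    show "0 < Q S" if "S \<in> Pow I" "0 < W S" for S
      using W_le_c[of S] that unfolding Q_def by (force intro!: prod_pos)
  qed (use assms c_nonneg in \<open>auto simp: Q_def intro!: prod_nonneg\<close>)
  also have "\<dots> = (\<Sum>i\<in>I. \<Sum>S\<in>Pow I. W S * - ln (c S i))"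
    by (simp add: ln_Q sum.swap[of _ I])
  also have "\<dots> = (\<Sum>i\<in>I. binary_entropy (p i))"
  proof (intro sum.cong refl)
    fix i assume "i \<in> I"
    have "(\<Sum>S\<in>Pow I. W S * - ln (c S i)) = (\<Sum>S\<in>Pow I.
        - ln (p i) * (if i \<in> S then W S else 0) - ln (1 - p i) * (if i \<in> S then 0 else W S))"
      by (intro sum.cong refl) (simp add: c_def)
    also have "\<dots> = - ln (p i) * (\<Sum>S\<in>Pow I. if i \<in> S then W S else 0)
        - ln (1 - p i) * (\<Sum>S\<in>Pow I. if i \<in> S then 0 else W S)"
      by (simp add: sum_subtractf sum_distrib_left)
    finally show "(\<Sum>S\<in>Pow I. W S * - ln (c S i)) = binary_entropy (p i)"
      using marginal[OF \<open>i \<in> I\<close>] sum_Pow_compl_marginal[OF W(2) marginal[OF \<open>i \<in> I\<close>]]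
      by (simp add: binary_entropy_def)
  qed
  finally show ?thesis .
qed

lemma binary_entropy_le:
  assumes "0 \<le> p" "p \<le> 1"
  shows "binary_entropy p \<le> p + p * ln (1 / p)"
proof -
  have "- (1 - p) * ln (1 - p) \<le> p"
  proof (cases "p = 1")
    case False
    then have "1 - p > 0" using assms by simp
    have "- (1 - p) * ln (1 - p) = (1 - p) * ln (1 / (1 - p))"
      using \<open>1 - p > 0\<close> by (simp add: ln_div algebra_simps)
    also have "\<dots> \<le> (1 - p) * (1 / (1 - p) - 1)"
      using \<open>1 - p > 0\<close> by (intro mult_left_mono ln_le_minus_one) auto
    also have "\<dots> = p"
      using \<open>1 - p > 0\<close> by (simp add: field_simps)
    finally show ?thesis .
  qed simp
  moreover have "- p * ln p = p * ln (1 / p)"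
    using assms by (cases "p = 0") (simp_all add: ln_div)
  ultimately show ?thesis unfolding binary_entropy_def by linarith
qed

theorem mainTheorem2:
  fixes n :: nat and f :: "(nat \<Rightarrow> real) \<Rightarrow> real"
  assumes "n \<ge> 1"
    and "\<And>x. x \<in> cube n \<Longrightarrow> f x \<in> {-1, 1}"
  shows "spectral_entropy n f \<le> (1 / ln 2) * (3 * total_infl n f +
           (\<Sum>k<n. if infl_k n f k = 0 then 0
                    else infl_k n f k * ln (4 / infl_k n f k)))"
proof -
  define W where "W S = (fourier n f S)\<^sup>2" for S
  define p where "p k = infl_k n f k" for k
  have entropy_W: "shannon_entropy (Pow {..<n}) W \<le> (\<Sum>k<n. binary_entropy (p k))"
  proof (rule shannon_entropy_le_sum_binary_entropy)
    show "(\<Sum>S\<in>Pow {..<n}. W S) = 1"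
      unfolding W_def by (rule sum_fourier_squared_boolean[OF assms(2)])
    show "(\<Sum>S\<in>Pow {..<n}. if k \<in> S then W S else 0) = p k" if "k \<in> {..<n}" for k
      unfolding W_def p_def using infl_k_eq_fourier_weight[of k n f] assms(2) that by simp
  qed (simp_all add: W_def)
  have binary_entropy_p: "binary_entropy (p k) \<le> 3 * p k + (if p k = 0 then 0 else p k * ln (4 / p k))"
    for k
  proof -
    have "0 \<le> p k" "p k \<le> 1" using infl_k_bounds[of n f k] by (auto simp: p_def)
    moreover have "p k * ln (1 / p k) \<le> p k * ln (4 / p k)" if "p k > 0"
      using that by (intro mult_left_mono) (auto intro: divide_right_mono)
    ultimately show ?thesis using binary_entropy_le[of "p k"] by (cases "p k = 0"; simp; linarith)
  qed
  have "spectral_entropy n f = (1 / ln 2) * shannon_entropy (Pow {..<n}) W"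
    unfolding spectral_entropy_def shannon_entropy_def sum_distrib_left
    by (intro sum.cong refl) (simp add: W_def log_def)
  also have "\<dots> \<le> (1 / ln 2) * (\<Sum>k<n. 3 * p k + (if p k = 0 then 0 else p k * ln (4 / p k)))"
    using order_trans[OF entropy_W sum_mono[OF binary_entropy_p]] by (intro mult_left_mono) auto
  also have "\<dots> = (1 / ln 2) * (3 * total_infl n f +
           (\<Sum>k<n. if infl_k n f k = 0 then 0 else infl_k n f k * ln (4 / infl_k n f k)))"
    unfolding p_def total_infl_def by (simp add: sum.distrib sum_distrib_left)
  finally show ?thesis .
qed

end
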